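(* Let $\frac23\le M<\frac34$ and consider Algorithm D on an input whose optimal offline makespan is $1$. If job $j$ is handled by Step 4 and is assigned to $m_1$, then the set $W$ computed in Step 4 satisfies $|W|\le 1$ and $|W|<|Y_{j-1}|$.
   Context: Model (two hierarchical machines with migration, bin stretching). Jobs $1,2,\dots,n$ arrive one by one. Job $j$ has a size $p_j>0$ and a grade of service (GoS) $g_j\in\{1,2\}$; a job of GoS $1$ may only be processed on machine $m_1$, a job of GoS $2$ may be processed on $m_1$ or on $m_2$. When job $j$ arrives, the algorithm must assign it, and may migrate previously arrived jobs (respecting GoS) of total size at most $M\cdot p_j$. The optimal offline makespan of the complete input is known in advance and scaled to $1$. Notation: $Y_{j}$ is the set of jobs on $m_2$ just after job $j$ has been handled, $y_j$ its total size, $y_0=0$; "sorted $Y_{j-1}$" lists $Y_{j-1}$ in non-increasing order of size; $w_j$ is the total size of the (current) set $W$. Algorithm D (parameter $M$). On arrival of job $j$: Step 2: if $g_j=1$ or $y_{j-1}\ge M$, assign $j$ to $m_1$. Step 3: else if $y_{j-1}+p_j\le 2-M$, assign $j$ to $m_2$. Step 4: else if $p_j\ge M$: let $W$ be the longest prefix of sorted $Y_{j-1}$ with total size at most $M\cdot p_j$ (possibly empty). If $y_{j-1}-w_j+p_j>2-M$, assign $j$ to $m_1$; otherwise migrate the jobs of $W$ to $m_1$ and assign $j$ to $m_2$. Step 5: else (so $p_j<M$): let $W$ be the shortest prefix of sorted $Y_{j-1}$ with total size at least $M/3$ (or $Y_{j-1}$ if none exists). If $w_j>\min\{2M/3,\,M\cdot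 p_j\}$, replace $W$ by $Y_{j-1}\setminus W$. Then, if $y_{j-1}-w_j+p_j>2-M$, assign $j$ to $m_1$; otherwise migrate the jobs of $W$ to $m_1$ and assign $j$ to $m_2$. *)

theory Defs
  imports Complex_Main "HOL-Library.Product_Lexorder"
begin

text \<open>Jobs are indexed 1,2,...,n. p j is the size, g j the grade of service (1 or 2).
  A state of Algorithm D is represented by the set Y of (indices of) jobs on machine m2.\<close>

definition load :: "(nat \<Rightarrow> real) \<Rightarrow> nat set \<Rightarrow> real" where
  "load p S = (\<Sum>i\<in>S. p i)"

definition sortedY :: "(nat \<Rightarrow> real) \<Rightarrow> nat set \<Rightarrow> nat list" where
  "sortedY p Y = sort_key (\<lambda>i. (- p i, i)) (sorted_list_of_set Y)"

definition prefix_load :: "(nat \<Rightarrow> real) \<Rightarrow> nat set \<Rightarrow> nat \<Rightarrow> real" where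
  "prefix_load p Y k = sum_list (map p (take k (sortedY p Y)))"

definition W_step4 :: "real \<Rightarrow> (nat \<Rightarrow> real) \<Rightarrow> nat set \<Rightarrow> nat \<Rightarrow> nat set" where
  "W_step4 M p Y j =
     set (take (GREATEST k. k \<le> card Y \<and> prefix_load p Y k \<le> M * p j) (sortedY p Y))"

definition W_step5 :: "real \<Rightarrow> (nat \<Rightarrow> real) \<Rightarrow> nat set \<Rightarrow> nat \<Rightarrow> nat set" where
  "W_step5 M p Y j =
     (let W0 = (if (\<exists>k\<le>card Y. prefix_load p Y k \<ge> M / 3)
                then set (take (LEAST k. k \<le> card Y \<and> prefix_load p Y k \<ge> M / 3) (sortedY p Y))
                else Y)
      in if load p W0 > min (2 * M / 3) (M * p j) then Y - W0 else W0)"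

definition stepD :: "real \<Rightarrow> (nat \<Rightarrow> real) \<Rightarrow> (nat \<Rightarrow> nat) \<Rightarrow> nat set \<Rightarrow> nat \<Rightarrow> nat set" where
  "stepD M p g Y j =
     (if g j = 1 \<or> load p Y \<ge> M then Y
      else if load p Y + p j \<le> 2 - M then insert j Y
      else if p j \<ge> M then
        (let W = W_step4 M p Y j in
          if load p Y - load p W + p j > 2 - M then Y else insert j (Y - W))
      else
        (let W = W_step5 M p Y j in
          if load p Y - load p W + p j > 2 - M then Y else insert j (Y - W)))"

text \<open>algY M p g j = Y_j, the set of jobs on m2 just after job j has been handled.\<close>
fun algY :: "real \<Rightarrow> (nat \<Rightarrow> real) \<Rightarrow> (nat \<Rightarrow> nat) \<Rightarrow> nat \<Rightarrow> nat set" where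
  "algY M p g 0 = {}"
| "algY M p g (Suc j) = stepD M p g (algY M p g j) (Suc j)"

text \<open>Optimal offline makespan of jobs 1..n: minimum over GoS-respecting schedules
  (S = set of jobs placed on m2).\<close>
definition opt_makespan :: "nat \<Rightarrow> (nat \<Rightarrow> real) \<Rightarrow> (nat \<Rightarrow> nat) \<Rightarrow> real" where
  "opt_makespan n p g =
     Min ((\<lambda>S. max (load p ({1..n} - S)) (load p S)) ` {S. S \<subseteq> {1..n} \<and> (\<forall>i\<in>S. g i = 2)})"

end

theory Submission
  imports Defs
begin

text \<open>Let \<open>W\<close> consist of the first \<open>k\<close> jobs of \<open>Y\<close> in non-increasing order of size, and let \<open>q\<close>
  be the next one. \<open>W = Y\<close> is impossible: rejection would then mean \<open>p\<^sub>j > 2 - M > 1\<close>, while no job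
  exceeds the optimal makespan. If \<open>k \<ge> 2\<close>, then \<open>q \<le> w/2\<close>, and maximality of \<open>W\<close> gives
  \<open>3w/2 \<ge> w + q > M p\<^sub>j\<close>; together with \<open>w < y + p\<^sub>j - 2 + M < 2M - 2 + p\<^sub>j\<close> and \<open>p\<^sub>j \<le> 1\<close>
  this forces \<open>M > 3/4\<close>.\<close>

lemma algY_subset: "algY M p g k \<subseteq> {1..k}"
proof (induction k)
  case 0
  then show ?case by simp
next
  case (Suc k)
  have "stepD M p g (algY M p g k) (Suc k) \<subseteq> insert (Suc k) (algY M p g k)"
    unfolding stepD_def Let_def by auto
  also have "\<dots> \<subseteq> {1..Suc k}" using Suc.IH by auto
  finally show ?case by simp
qed

lemma job_size_le_opt_makespan:
  assumes "\<forall>i\<in>{1..n}. 0 \<le> p i" and "i \<in> {1..n}"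
  shows "p i \<le> opt_makespan n p g"
proof -
  let ?F = "{S. S \<subseteq> {1..n} \<and> (\<forall>i\<in>S. g i = 2)}"
  have "finite ?F" by (rule finite_subset[of _ "Pow {1..n}"]) auto
  moreover have "?F \<noteq> {}" by auto
  moreover have "p i \<le> max (load p ({1..n} - S)) (load p S)" if "S \<in> ?F" for S
  proof (cases "i \<in> S")
    case True
    with that assms have "p i \<le> load p S"
      unfolding load_def by (intro member_le_sum) (auto intro: finite_subset)
    then show ?thesis by linarith
  next
    case False
    with assms have "p i \<le> load p ({1..n} - S)"
      unfolding load_def by (intro member_le_sum) auto
    then show ?thesis by linarith
  qed
  ultimately show ?thesis unfolding opt_makespan_def by (simp add: Min_ge_iff)
qed

lemma
  assumes "finite Y"
  shows set_sortedY: "set (sortedY p Y) = Y"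
    and distinct_sortedY: "distinct (sortedY p Y)"
    and length_sortedY: "length (sortedY p Y) = card Y"
  using assms unfolding sortedY_def by (auto simp: distinct_card[symmetric])

lemma sortedY_size_antimono:
  assumes "i \<le> k" and "k < length (sortedY p Y)"
  shows "p (sortedY p Y ! k) \<le> p (sortedY p Y ! i)"
proof -
  have "sorted (map (\<lambda>i. (- p i, i)) (sortedY p Y))" unfolding sortedY_def by simp
  then have "(- p (sortedY p Y ! i), sortedY p Y ! i) \<le> (- p (sortedY p Y ! k), sortedY p Y ! k)"
    using sorted_nth_mono[of _ i k] assms by fastforce
  then show ?thesis by (auto simp: less_eq_prod_def)
qed

lemma prefix_load_Suc:
  assumes "k < length (sortedY p Y)"
  shows "prefix_load p Y (Suc k) = prefix_load p Y k + p (sortedY p Y ! k)"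
  using assms unfolding prefix_load_def by (simp add: take_Suc_conv_app_nth)

lemma prefix_load_ge_next:
  assumes "k < length (sortedY p Y)"
  shows "real k * p (sortedY p Y ! k) \<le> prefix_load p Y k"
proof -
  have "real k * p (sortedY p Y ! k) = (\<Sum>i = 0..<k. p (sortedY p Y ! k))" by simp
  also have "\<dots> \<le> (\<Sum>i = 0..<k. p (sortedY p Y ! i))"
    using assms by (intro sum_mono sortedY_size_antimono) auto
  also have "\<dots> = prefix_load p Y k"
    unfolding prefix_load_def using assms by (simp add: sum_list_sum_nth)
  finally show ?thesis .
qed

lemma load_take_sortedY:
  assumes "finite Y"
  shows "load p (set (take k (sortedY p Y))) = prefix_load p Y k"
  unfolding load_def prefix_load_def
  using distinct_sortedY[OF assms] by (simp add: sum_list_distinct_conv_sum_set)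

lemma prefix_load_card:
  assumes "finite Y"
  shows "prefix_load p Y (card Y) = load p Y"
  using load_take_sortedY[OF assms, of p "card Y"] by (simp add: length_sortedY[OF assms] set_sortedY[OF assms])

lemma W_step4_longest_prefix:
  assumes "finite Y" and "0 \<le> M * p j"
  obtains k where "W_step4 M p Y j = set (take k (sortedY p Y))"
    and "k \<le> card Y" and "card (W_step4 M p Y j) = k"
    and "load p (W_step4 M p Y j) = prefix_load p Y k"
    and "prefix_load p Y k \<le> M * p j"
    and "k < card Y \<Longrightarrow> M * p j < prefix_load p Y (Suc k)"
proof -
  define P where "P k \<longleftrightarrow> k \<le> card Y \<and> prefix_load p Y k \<le> M * p j" for k
  define k where "k = (GREATEST k. P k)"
  have bound: "\<And>m. P m \<Longrightarrow> m \<le> card Y" unfolding P_def by auto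
  have "P 0" unfolding P_def prefix_load_def using assms(2) by simp
  then have "P k" unfolding k_def by (rule GreatestI_nat[OF _ bound])
  have maximal: "\<not> P (Suc k)"
  proof
    assume "P (Suc k)"
    then have "Suc k \<le> k" unfolding k_def by (rule Greatest_le_nat[OF _ bound])
    then show False by simp
  qed
  have W: "W_step4 M p Y j = set (take k (sortedY p Y))"
    unfolding W_step4_def k_def P_def ..
  show thesis
  proof (rule that[OF W])
    show "k \<le> card Y" "prefix_load p Y k \<le> M * p j" using \<open>P k\<close> P_def by auto
    show "card (W_step4 M p Y j) = k"
      using W \<open>k \<le> card Y\<close> distinct_sortedY[OF assms(1)] length_sortedY[OF assms(1)]
      by (simp add: distinct_card)
    show "load p (W_step4 M p Y j) = prefix_load p Y k"
      using W load_take_sortedY[OF assms(1)] by simp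
    show "M * p j < prefix_load p Y (Suc k)" if "k < card Y"
      using maximal that P_def by auto
  qed
qed

lemma W_step4_small_if_rejected:
  assumes "finite Y" and nonneg: "\<forall>i\<in>Y. 0 \<le> p i"
    and "0 \<le> M" and "M \<le> 3 / 4" and "0 \<le> p j" and "p j \<le> 1"
    and "load p Y < M"
    and rejected: "2 - M < load p Y - load p (W_step4 M p Y j) + p j"
  shows "card (W_step4 M p Y j) \<le> 1 \<and> card (W_step4 M p Y j) < card Y"
proof -
  have "0 \<le> M * p j" using \<open>0 \<le> M\<close> \<open>0 \<le> p j\<close> by simp
  then obtain k where card: "card (W_step4 M p Y j) = k" and "k \<le> card Y"
    and load: "load p (W_step4 M p Y j) = prefix_load p Y k"
    and next_exceeds: "k < card Y \<Longrightarrow> M * p j < prefix_load p Y (Suc k)"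
    using W_step4_longest_prefix[OF assms(1)] by metis
  have "k \<noteq> card Y"
  proof
    assume "k = card Y"
    then have "load p (W_step4 M p Y j) = load p Y" using load prefix_load_card[OF assms(1)] by simp
    with rejected \<open>M \<le> 3 / 4\<close> \<open>p j \<le> 1\<close> show False by simp
  qed
  with \<open>k \<le> card Y\<close> have "k < card Y" by simp
  have "k \<le> 1"
  proof (rule ccontr)
    assume "\<not> k \<le> 1"
    define q where "q = p (sortedY p Y ! k)"
    have k_lt: "k < length (sortedY p Y)" using \<open>k < card Y\<close> length_sortedY[OF assms(1)] by simp
    then have "0 \<le> q" unfolding q_def using nonneg set_sortedY[OF assms(1)] nth_mem by metis
    with \<open>\<not> k \<le> 1\<close> have "2 * q \<le> real k * q" by (intro mult_right_mono) auto
    with prefix_load_ge_next[OF k_lt] have "2 * q \<le> prefix_load p Y k" unfolding q_def by linarith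
    moreover have "M * p j < prefix_load p Y k + q"
      using next_exceeds[OF \<open>k < card Y\<close>] prefix_load_Suc[OF k_lt] q_def by simp
    moreover have "(3 / 2 - M) * p j \<le> 3 / 2 - M"
      using \<open>p j \<le> 1\<close> \<open>M \<le> 3 / 4\<close> by (simp add: mult_left_le)
    ultimately show False
      using rejected load \<open>load p Y < M\<close> \<open>M \<le> 3 / 4\<close> by (simp add: algebra_simps)
  qed
  with card \<open>k < card Y\<close> show ?thesis by simp
qed

theorem mainTheorem14:
  fixes M :: real and p :: "nat \<Rightarrow> real" and g :: "nat \<Rightarrow> nat" and n j :: nat
  assumes "2 / 3 \<le> M" and "M < 3 / 4"
    and "\<forall>i\<in>{1..n}. p i > 0 \<and> g i \<in> {1, 2}"
    and "opt_makespan n p g = 1"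
    and "j \<in> {1..n}"
    \<comment> \<open>job j is handled by Step 4\<close>
    and "g j = 2" and "load p (algY M p g (j - 1)) < M"
    and "load p (algY M p g (j - 1)) + p j > 2 - M"
    and "p j \<ge> M"
    \<comment> \<open>and is assigned to m1\<close>
    and "load p (algY M p g (j - 1)) - load p (W_step4 M p (algY M p g (j - 1)) j) + p j > 2 - M"
  shows "card (W_step4 M p (algY M p g (j - 1)) j) \<le> 1
       \<and> card (W_step4 M p (algY M p g (j - 1)) j) < card (algY M p g (j - 1))"
proof (rule W_step4_small_if_rejected)
  have "{1..j - 1} \<subseteq> {1..n}" using assms(5) by auto
  then have "algY M p g (j - 1) \<subseteq> {1..n}" using algY_subset[of M p g "j - 1"] by blast
  then show "finite (algY M p g (j - 1))" and "\<forall>i\<in>algY M p g (j - 1). 0 \<le> p i"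
    using assms(3) by (auto intro: finite_subset less_imp_le)
  show "p j \<le> 1"
    using job_size_le_opt_makespan[of n p j g] assms(3-5) by (auto intro: less_imp_le)
qed (use assms in auto)

end
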